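(* Let $t$ be a random permutation of $\{0,\dots,N-1\}$ with an arbitrary distribution that is not $\delta$ non-uniform, and let $S$ be a part of maximum size among those satisfying $\Pr[S\subseteq\mathrm{parts}(t)]>2^{\delta|S|}\,(N-|S|)!/N!$. Then for every part $S'$ distinct from $S$, $$\Pr[S'\subseteq\mathrm{parts}(t)\mid S\subseteq\mathrm{parts}(t)]\le2^{\delta|S'|}\frac{(N-|S|-|S'|)!}{(N-|S|)!}.$$
   Context: A part is a set $S=\{(x_i,y_i)\}_{i=1}^M$ such that some permutation $\pi$ of $\{0,\dots,N-1\}$ has $\pi(x_i)=y_i$ for all $i$; "$S\subseteq\mathrm{parts}(t)$" means $t(x_i)=y_i$ for all $i$. Parts $S,S'$ are distinct if they share no input and $S\cup S'$ is a part. A random permutation $t$ is $\delta$ non-uniform if $\Pr[S\subseteq\mathrm{parts}(t)]\le2^{\delta|S|}(N-|S|)!/N!$ for every part $S$ (the right-hand factor being the probability for a uniformly random permutation). *)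

theory Defs
  imports "HOL-Probability.Probability" "HOL-Combinatorics.Permutations"
begin

definition is_part :: "nat \<Rightarrow> (nat \<times> nat) set \<Rightarrow> bool" where
  "is_part N S \<longleftrightarrow> finite S \<and> S \<subseteq> {0..<N} \<times> {0..<N} \<and>
     (\<exists>\<pi>. \<pi> permutes {0..<N} \<and> (\<forall>(x,y)\<in>S. \<pi> x = y))"

text \<open>The event that S is contained in parts(t).\<close>
definition part_event :: "(nat \<times> nat) set \<Rightarrow> (nat \<Rightarrow> nat) set" where
  "part_event S = {p. \<forall>(x,y)\<in>S. p x = y}"

definition distinct_parts :: "nat \<Rightarrow> (nat \<times> nat) set \<Rightarrow> (nat \<times> nat) set \<Rightarrow> bool" where
  "distinct_parts N S S' \<longleftrightarrow> fst ` S \<inter> fst ` S' = {} \<and> is_part N (S \<union> S')"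

definition unif_bound :: "real \<Rightarrow> nat \<Rightarrow> nat \<Rightarrow> real" where
  "unif_bound \<delta> N k = 2 powr (\<delta> * real k) * fact (N - k) / fact N"

definition non_uniform :: "real \<Rightarrow> nat \<Rightarrow> (nat \<Rightarrow> nat) pmf \<Rightarrow> bool" where
  "non_uniform \<delta> N t \<longleftrightarrow>
     (\<forall>S. is_part N S \<longrightarrow> measure_pmf.prob t (part_event S) \<le> unif_bound \<delta> N (card S))"

end

theory Submission
  imports Defs
begin

text \<open>Conditioning on the maximal violating part S, the event for S' is the event for the
  strictly larger part S \<union> S', which by maximality of S satisfies the uniform-type bound;
  dividing that bound by the one S violates gives exactly the claimed quotient of factorials.
  The hypotheses that t lives on permutations and is not non-uniform only ensure that such an S
  exists, so they are unused here.\<close>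

lemma part_event_Un: "part_event S' \<inter> part_event S = part_event (S \<union> S')"
  unfolding part_event_def by (auto simp: case_prod_beta)

lemma unif_bound_pos: "unif_bound \<delta> N k > 0"
  unfolding unif_bound_def by simp

lemma unif_bound_divide:
  "unif_bound \<delta> N (s + s') / unif_bound \<delta> N s
     = 2 powr (\<delta> * real s') * fact (N - s - s') / fact (N - s)"
  unfolding unif_bound_def
  by (simp add: powr_add[symmetric] distrib_left field_simps diff_diff_add)

lemma card_Un_distinct_parts:
  assumes "distinct_parts N S S'"
  shows "card (S \<union> S') = card S + card S'"
proof -
  have "finite (S \<union> S')" and "fst ` S \<inter> fst ` S' = {}"
    using assms unfolding distinct_parts_def is_part_def by auto
  then show ?thesis by (intro card_Un_disjoint) auto
qed

theorem mainTheorem8: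
  fixes N :: nat and \<delta> :: real and t :: "(nat \<Rightarrow> nat) pmf"
    and S S' :: "(nat \<times> nat) set"
  assumes perm: "\<forall>p\<in>set_pmf t. p permutes {0..<N}"
    and not_nu: "\<not> non_uniform \<delta> N t"
    and S_part: "is_part N S"
    and S_big: "measure_pmf.prob t (part_event S) > unif_bound \<delta> N (card S)"
    and S_max: "\<forall>S''. is_part N S'' \<and>
                  measure_pmf.prob t (part_event S'') > unif_bound \<delta> N (card S'')
                  \<longrightarrow> card S'' \<le> card S"
    and dist: "distinct_parts N S S'"
  shows "measure_pmf.prob t (part_event S' \<inter> part_event S) / measure_pmf.prob t (part_event S)
           \<le> 2 powr (\<delta> * real (card S')) * fact (N - card S - card S') / fact (N - card S)"
proof -
  let ?P = "measure_pmf.prob t"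
  have card_Un: "card (S \<union> S') = card S + card S'"
    using card_Un_distinct_parts[OF dist] .
  have P_S_pos: "?P (part_event S) > 0"
    using S_big unif_bound_pos[of \<delta> N "card S"] by linarith
  show ?thesis
  proof (cases "card S' = 0")
    case True
    then have "S' = {}"
      using dist card_Un unfolding distinct_parts_def is_part_def by auto
    then show ?thesis using True P_S_pos by (simp add: part_event_def)
  next
    case False
    have "is_part N (S \<union> S')" using dist unfolding distinct_parts_def by simp
    then have P_Un: "?P (part_event (S \<union> S')) \<le> unif_bound \<delta> N (card S + card S')"
      using S_max False card_Un by force
    have "?P (part_event (S \<union> S')) / ?P (part_event S)
          \<le> unif_bound \<delta> N (card S + card S') / unif_bound \<delta> N (card S)"
      using P_Un S_big unif_bound_pos by (intro frac_le) (auto intro: less_imp_le)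
    then show ?thesis by (simp only: part_event_Un unif_bound_divide)
  qed
qed

end
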